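(* Let $q$ be a prime power and let $d,\tau,n,m$ be integers with $\lfloor (d-1)/2\rfloor+1\le\tau<d\le n\le m$ and $\tau\le n-\tau$. Then there exist a code $\mathcal C\subseteq\mathbb F_{q^m}^n$ with minimum rank distance at least $d$ and a word $\mathbf r\in\mathbb F_{q^m}^n$ such that $$\max_{\mathbf y\in\mathbb F_{q^m}^n}|\mathcal C\cap\mathcal B_\tau(\mathbf y)|\ \ge\ |\mathcal C\cap\mathcal B_\tau(\mathbf r)|\ \ge\ q^{(n-\tau)(\tau-\lfloor (d-1)/2\rfloor)}.$$
   Context: Fixing a basis of $\mathbb F_{q^m}$ over $\mathbb F_q$, each vector in $\mathbb F_{q^m}^n$ is identified with an $m\times n$ matrix over $\mathbb F_q$; $\mathrm{rk}$ denotes the rank of this matrix. The minimum rank distance of $\mathcal C$ is $\min\{\mathrm{rk}(\mathbf c_1-\mathbf c_2):\mathbf c_1\neq\mathbf c_2\in\mathcal C\}$, and $\mathcal B_\tau(\mathbf r)=\{\mathbf x:\mathrm{rk}(\mathbf x-\mathbf r)\le\tau\}$. Codes are not required to be linear. *)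

theory Defs
  imports "HOL-Analysis.Analysis"
begin

text \<open>Vectors of F_{q^m}^n are represented (via a fixed F_q-basis of F_{q^m})
  as m x n matrices over F_q, i.e. elements of 'a^'n^'m where 'a is F_q,
  CARD('n) = n and CARD('m) = m.\<close>

definition min_rank_dist_ge :: "('a::field^'n^'m) set \<Rightarrow> nat \<Rightarrow> bool" where
  "min_rank_dist_ge C d \<longleftrightarrow> (\<forall>c1\<in>C. \<forall>c2\<in>C. c1 \<noteq> c2 \<longrightarrow> d \<le> rank (c1 - c2))"

definition rank_ball :: "nat \<Rightarrow> 'a::field^'n^'m \<Rightarrow> ('a^'n^'m) set" where
  "rank_ball \<tau> r = {x. rank (x - r) \<le> \<tau>}"

end

theory Submission
  imports Defs "HOL-Algebra.Algebraic_Closure_Type" "HOL-Number_Theory.Cong"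
begin

text \<open>Write \<open>t = (d - 1) div 2\<close>, \<open>s = \<tau> - t\<close> and \<open>N = n - \<tau>\<close>. A Gabidulin code over the field with
  \<open>q ^ N\<close> elements, whose codewords are the \<open>q\<close>-linearized polynomials of \<open>q\<close>-degree below \<open>s\<close>
  evaluated at \<open>\<tau>\<close> independent points and expanded over a basis, consists of \<open>q ^ (N s)\<close> matrices
  \<open>A\<close> of size \<open>\<tau> \<times> N\<close> whose pairwise differences have rank at least \<open>\<tau> - s + 1 = t + 1\<close>: a nonzero
  linearized polynomial of \<open>q\<close>-degree below \<open>s\<close> has at most \<open>q ^ (s - 1)\<close> roots. Each \<open>A\<close> is lifted to
  \<open>[I; A\<^sup>T] [I, A]\<close>, padded by zero rows; these lifts have rank \<open>\<tau>\<close>, so they all lie in the ball of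
  radius \<open>\<tau>\<close> around \<open>0\<close>, while the difference of two lifts is \<open>[0, D; D\<^sup>T, *]\<close> and has rank at
  least \<open>2 rank D \<ge> 2 (t + 1) \<ge> d\<close>.\<close>

lemma sum_in_closed_set:
  assumes "0 \<in> V" "\<And>x y. x \<in> V \<Longrightarrow> y \<in> V \<Longrightarrow> x + y \<in> V" "\<And>i. i \<in> A \<Longrightarrow> f i \<in> V"
  shows "sum f A \<in> V"
  using assms(3) by (induction A rule: infinite_finite_induct) (auto intro: assms(1,2))

lemma coordinates_extend:
  fixes S :: "'b::field set"
  assumes S: "\<And>a b. a \<in> S \<Longrightarrow> b \<in> S \<Longrightarrow> a - b \<in> S" "\<And>a b. a \<in> S \<Longrightarrow> b \<in> S \<Longrightarrow> a * b \<in> S"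
      "\<And>a. a \<in> S \<Longrightarrow> inverse a \<in> S"
    and inj: "inj_on (\<lambda>l. \<Sum>i<j. l i * b i) ({..<j} \<rightarrow>\<^sub>E S)"
    and v: "v \<notin> (\<lambda>l. \<Sum>i<j. l i * b i) ` ({..<j} \<rightarrow>\<^sub>E S)"
  shows "inj_on (\<lambda>l. \<Sum>i<Suc j. l i * (b(j := v)) i) ({..<Suc j} \<rightarrow>\<^sub>E S)"
proof (rule inj_onI)
  fix l l' assume l: "l \<in> {..<Suc j} \<rightarrow>\<^sub>E S" and l': "l' \<in> {..<Suc j} \<rightarrow>\<^sub>E S"
    and eq: "(\<Sum>i<Suc j. l i * (b(j := v)) i) = (\<Sum>i<Suc j. l' i * (b(j := v)) i)"
  have sums: "(\<Sum>i<j. l i * b i) + l j * v = (\<Sum>i<j. l' i * b i) + l' j * v"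
    using eq by simp
  have last: "l j = l' j"
  proof (rule ccontr)
    assume "l j \<noteq> l' j"
    define \<delta> where "\<delta> = l j - l' j"
    have "\<delta> \<noteq> 0" "\<delta> \<in> S" using \<open>l j \<noteq> l' j\<close> l l' S(1) by (auto simp: \<delta>_def)
    define c where "c = restrict (\<lambda>i. inverse \<delta> * (l' i - l i)) {..<j}"
    have c: "c \<in> {..<j} \<rightarrow>\<^sub>E S"
      using l l' by (auto simp: c_def PiE_iff intro!: S(1,2) S(3)[OF \<open>\<delta> \<in> S\<close>])
    have "\<delta> * v = (\<Sum>i<j. (l' i - l i) * b i)"
      using sums by (simp add: \<delta>_def algebra_simps sum_subtractf)
    then have "v = inverse \<delta> * (\<Sum>i<j. (l' i - l i) * b i)"
      using \<open>\<delta> \<noteq> 0\<close> by (simp add: field_simps)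
    also have "\<dots> = (\<Sum>i<j. c i * b i)"
      unfolding sum_distrib_left by (intro sum.cong) (auto simp: c_def)
    finally have "v = (\<Sum>i<j. c i * b i)" .
    then show False using v c by blast
  qed
  have "(\<Sum>i<j. restrict l {..<j} i * b i) = (\<Sum>i<j. restrict l' {..<j} i * b i)"
    using sums last by simp
  then have "restrict l {..<j} = restrict l' {..<j}"
    using l l' by (intro inj_onD[OF inj]) (auto simp: PiE_iff)
  then have "l i = l' i" if "i < Suc j" for i
    using last that by (metis less_SucE lessThan_iff restrict_apply')
  then show "l = l'" using l l' by (intro PiE_ext) auto
qed

text \<open>A maximal \<open>S\<close>-independent family in \<open>V\<close> spans \<open>V\<close>.\<close>
lemma exists_coordinates:
  fixes S V :: "'b::field set"
  assumes S: "finite S" "0 \<in> S" "1 \<in> S" "\<And>a b. a \<in> S \<Longrightarrow> b \<in> S \<Longrightarrow> a - b \<in> S"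
      "\<And>a b. a \<in> S \<Longrightarrow> b \<in> S \<Longrightarrow> a * b \<in> S" "\<And>a. a \<in> S \<Longrightarrow> inverse a \<in> S"
    and V: "finite V" "0 \<in> V" "\<And>x y. x \<in> V \<Longrightarrow> y \<in> V \<Longrightarrow> x + y \<in> V"
      "\<And>a x. a \<in> S \<Longrightarrow> x \<in> V \<Longrightarrow> a * x \<in> V"
  shows "\<exists>(k::nat) b. (\<forall>i<k. b i \<in> V) \<and> bij_betw (\<lambda>l. \<Sum>i<k. l i * b i) ({..<k} \<rightarrow>\<^sub>E S) V"
proof -
  define indep where
    "indep (j::nat) (b::nat \<Rightarrow> 'b) \<longleftrightarrow> (\<forall>i<j. b i \<in> V) \<and> inj_on (\<lambda>l. \<Sum>i<j. l i * b i) ({..<j} \<rightarrow>\<^sub>E S)" for j b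
  have image_sub: "(\<lambda>l. \<Sum>i<j. l i * b i) ` ({..<j} \<rightarrow>\<^sub>E S) \<subseteq> V" if "\<forall>i<j. b i \<in> V" for j b
    using that by (auto intro!: sum_in_closed_set[OF V(2,3)] V(4))
  have "2 \<le> card S"
    using card_mono[OF S(1), of "{0, 1}"] S(2,3) by simp
  have bound: "j < card V" if "indep j b" for j b
  proof -
    have "card ({..<j} \<rightarrow>\<^sub>E S) \<le> card V"
      using card_inj_on_le[OF _ image_sub V(1)] that by (auto simp: indep_def)
    then have "card S ^ j \<le> card V" by (simp add: card_funcsetE)
    moreover have "j < 2 ^ j" by simp
    moreover have "2 ^ j \<le> card S ^ j" using \<open>2 \<le> card S\<close> by (simp add: power_mono)
    ultimately show ?thesis by linarith
  qed
  have "indep 0 b" for b by (simp add: indep_def)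
  then obtain j where j: "\<exists>b. indep j b" "\<And>j' b. indep j' b \<Longrightarrow> j' \<le> j"
    using Nat.ex_has_greatest_nat[of "\<lambda>j. \<exists>b. indep j b" 0 "card V"] bound
    by (metis less_imp_le)
  then obtain b where b: "indep j b" by blast
  have "(\<lambda>l. \<Sum>i<j. l i * b i) ` ({..<j} \<rightarrow>\<^sub>E S) = V"
  proof (rule ccontr)
    assume "(\<lambda>l. \<Sum>i<j. l i * b i) ` ({..<j} \<rightarrow>\<^sub>E S) \<noteq> V"
    then obtain v where "v \<in> V" "v \<notin> (\<lambda>l. \<Sum>i<j. l i * b i) ` ({..<j} \<rightarrow>\<^sub>E S)"
      using image_sub[of j b] b by (auto simp: indep_def)
    then have "indep (Suc j) (b(j := v))"
      using b coordinates_extend[OF S(4-6)] by (auto simp: indep_def less_Suc_eq)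
    then show False using j(2) by fastforce
  qed
  then have "bij_betw (\<lambda>l. \<Sum>i<j. l i * b i) ({..<j} \<rightarrow>\<^sub>E S) V"
    using b by (simp add: indep_def bij_betw_def)
  then show ?thesis
    using b unfolding indep_def by (intro exI[of _ j] exI[of _ b]) simp
qed

lemma power_card_eq_self: "(x::'a::{finite,field}) ^ CARD('a) = x"
proof (cases "x = 0")
  case False
  have "x * (\<Prod>y\<in>UNIV-{0}. x * y) = x * x ^ (CARD('a) - 1) * \<Prod>(UNIV-{0})"
    by (simp add: prod.distrib mult_ac)
  also have "x * x ^ (CARD('a) - 1) = x ^ CARD('a)"
    using finite_UNIV_card_ge_0[where ?'a = 'a] by (simp flip: power_Suc)
  also have "(\<Prod>y\<in>UNIV-{0}. x * y) = (\<Prod>y\<in>UNIV-{0}. y)"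
    by (rule prod.reindex_bij_witness[of _ "\<lambda>y. y / x" "\<lambda>y. x * y"]) (use False in auto)
  finally show ?thesis by simp
qed (use finite_UNIV_card_ge_0[where ?'a = 'a] in auto)

lemma power_card_power_eq_self: "(x::'a::{finite,field}) ^ (CARD('a) ^ j) = x"
  by (induction j) (simp_all add: power_mult power_card_eq_self)

lemma two_le_card_field: "2 \<le> CARD('a::{finite,field})"
  using card_mono[of "UNIV :: 'a set" "{0, 1}"] by simp

lemma prime_CHAR_finite_field: "Factorial_Ring.prime CHAR('a::{finite,field})"
  using finite_imp_CHAR_pos[where ?'a = 'a] prime_CHAR_semidom[where ?'a = 'a] by simp

lemma card_range_of_nat: "card (range (of_nat :: nat \<Rightarrow> 'a::{finite,field})) = CHAR('a)"
proof -
  define p where "p = CHAR('a)"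
  have "p > 0" using prime_CHAR_finite_field[where 'a='a] by (simp add: p_def prime_gt_0_nat)
  have "range (of_nat :: nat \<Rightarrow> 'a) = of_nat ` {..<p}"
  proof
    show "range (of_nat :: nat \<Rightarrow> 'a) \<subseteq> of_nat ` {..<p}"
    proof
      fix x :: 'a assume "x \<in> range of_nat"
      then obtain n where "x = of_nat n" by blast
      moreover have "(of_nat n :: 'a) = of_nat (n mod p)"
        by (simp add: of_nat_eq_iff_cong_CHAR cong_def p_def)
      moreover have "n mod p < p" using \<open>p > 0\<close> by simp
      ultimately show "x \<in> of_nat ` {..<p}" by blast
    qed
  qed auto
  moreover have "inj_on (of_nat :: nat \<Rightarrow> 'a) {..<p}"
    by (rule inj_onI) (simp add: of_nat_eq_iff_cong_CHAR cong_def p_def)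
  ultimately show ?thesis by (simp add: card_image p_def)
qed

lemma of_nat_range_closed:
  fixes a b :: "'a::{finite,field}"
  shows "a \<in> range of_nat \<Longrightarrow> b \<in> range of_nat \<Longrightarrow> a - b \<in> range of_nat"
    and "a \<in> range of_nat \<Longrightarrow> b \<in> range of_nat \<Longrightarrow> a * b \<in> range of_nat"
    and "a \<in> range of_nat \<Longrightarrow> inverse a \<in> range of_nat"
proof -
  assume "a \<in> range of_nat" "b \<in> range of_nat"
  then obtain i j where ij: "a = of_nat i" "b = of_nat j" by blast
  have "CHAR('a) > 0" using prime_CHAR_finite_field[where 'a='a] by (simp add: prime_gt_0_nat)
  then have "(of_nat (i + (CHAR('a) - 1) * j) :: 'a) = a - b" by (simp add: ij of_nat_diff)
  then show "a - b \<in> range of_nat" by (metis rangeI)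
next
  assume "a \<in> range of_nat" "b \<in> range of_nat"
  then show "a * b \<in> range of_nat" by (auto simp flip: of_nat_mult)
next
  assume "a \<in> range of_nat"
  show "inverse a \<in> range of_nat"
  proof (cases "a = 0")
    case False
    define c where "c = CARD('a) - 2"
    have "CARD('a) = Suc (Suc c)" using two_le_card_field[where ?'a = 'a] unfolding c_def by simp
    then have "a * (a * a ^ c) = a" using power_card_eq_self[of a] by simp
    then have "a * a ^ c = 1" using False by simp
    then have "inverse a = a ^ c" by (rule inverse_unique)
    moreover obtain j where "a = of_nat j" using \<open>a \<in> range of_nat\<close> by blast
    ultimately show ?thesis by (simp flip: of_nat_power)
  qed (use \<open>a \<in> range of_nat\<close> in simp)
qed

text \<open>The prime field \<open>range of_nat\<close> supplies coordinates for the whole field.\<close>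
lemma card_eq_CHAR_power: "\<exists>k. CARD('a::{finite,field}) = CHAR('a) ^ k"
proof -
  have "(0::'a) \<in> range of_nat" "(1::'a) \<in> range of_nat" by (metis of_nat_0 rangeI, metis of_nat_1 rangeI)
  then obtain k :: nat and b
    where bij: "bij_betw (\<lambda>l. \<Sum>i<k. l i * b i) ({..<k} \<rightarrow>\<^sub>E range of_nat) (UNIV :: 'a set)"
    using exists_coordinates[of "range of_nat" UNIV, OF _ _ _ of_nat_range_closed] by auto
  have "CARD('a) = card ({..<k} \<rightarrow>\<^sub>E (range of_nat :: 'a set))" using bij_betw_same_card[OF bij] by simp
  also have "\<dots> = CHAR('a) ^ k" by (simp add: card_funcsetE card_range_of_nat)
  finally show ?thesis by blast
qed

lemma of_nat_card_eq_0: "(of_nat CARD('a::{finite,field}) :: 'a) = 0"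
proof -
  obtain k where k: "CARD('a) = CHAR('a) ^ k" using card_eq_CHAR_power by blast
  have "k \<noteq> 0" using two_le_card_field[where 'a='a] k by (cases k) auto
  then show ?thesis by (simp add: k)
qed

lemma frobenius_add:
  fixes x y :: "'a::{finite,field} alg_closure"
  shows "(x + y) ^ (CARD('a) ^ j) = x ^ (CARD('a) ^ j) + y ^ (CARD('a) ^ j)"
proof -
  obtain k where "CARD('a) = CHAR('a) ^ k" using card_eq_CHAR_power by blast
  then have "CARD('a) ^ j = CHAR('a alg_closure) ^ (k * j)" by (simp add: power_mult)
  moreover have "Factorial_Ring.prime CHAR('a alg_closure)"
    using prime_CHAR_finite_field[where 'a='a] by simp
  ultimately show ?thesis using freshmans_dream' by blast
qed

lemma frobenius_to_ac: "to_ac (a::'a::{finite,field}) ^ (CARD('a) ^ j) = to_ac a"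
  by (metis to_ac_power power_card_power_eq_self)

lemma card_roots_eq_degree:
  fixes p :: "'a::alg_closed_field poly"
  assumes "p \<noteq> 0" and simple: "\<And>x. poly p x = 0 \<Longrightarrow> poly (pderiv p) x \<noteq> 0"
  shows "card {x. poly p x = 0} = Polynomial.degree p"
proof -
  obtain A where A: "size A = Polynomial.degree p" "p = Polynomial.smult (Polynomial.lead_coeff p) (\<Prod>x\<in>#A. [:-x, 1:])"
    using alg_closed_imp_factorization[OF \<open>p \<noteq> 0\<close>] by blast
  have "proots (\<Prod>x\<in>#B. [:-x, 1:]) = B" for B :: "'a multiset"
  proof (induction B)
    case (add x B)
    have "(\<Prod>y\<in>#B. [:-y, 1:]) \<noteq> 0" by (auto simp: prod_mset_zero_iff)
    then show ?case using add.IH by (simp add: proots_mult del: mult_pCons_left)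
  qed simp
  then have "proots p = A"
    using \<open>p \<noteq> 0\<close> by (subst A(2)) simp
  have order_le_1: "count (proots p) x \<le> 1" for x
  proof (rule ccontr)
    assume "\<not> count (proots p) x \<le> 1"
    define r where "r = [:-x, 1:]"
    have "r ^ 2 dvd p"
      using \<open>\<not> count (proots p) x \<le> 1\<close> \<open>p \<noteq> 0\<close> order_divides unfolding r_def by fastforce
    then obtain g where "p = r ^ 2 * g" by (elim dvdE)
    then have g: "p = r * (r * g)" by (simp only: power2_eq_square mult.assoc)
    have "poly r x = 0" by (simp add: r_def)
    then have "poly (pderiv p) x = 0" "poly p x = 0" by (simp_all add: g pderiv_mult)
    then show False using simple by blast
  qed
  have "Polynomial.degree p = (\<Sum>x\<in>set_mset (proots p). count (proots p) x)"
    using A(1) \<open>proots p = A\<close> size_multiset_overloaded_eq by metis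
  also have "\<dots> = (\<Sum>x\<in>set_mset (proots p). 1)"
    using order_le_1 by (intro sum.cong refl) (metis One_nat_def Suc_leI count_greater_zero_iff le_antisym)
  also have "\<dots> = card (set_mset (proots p))" by simp
  finally show ?thesis using \<open>p \<noteq> 0\<close> by simp
qed

text \<open>The field with \<open>CARD('a) ^ N\<close> elements, realised inside the algebraic closure as the fixed
  points of the \<open>N\<close>-th power of the Frobenius map.\<close>
definition frob_fixed :: "nat \<Rightarrow> 'a::{finite,field} alg_closure set" where
  "frob_fixed N = {x. x ^ (CARD('a) ^ N) = x}"

lemma zero_in_frob_fixed: "0 \<in> frob_fixed N"
  by (simp add: frob_fixed_def)

lemma frob_fixed_add: "x \<in> frob_fixed N \<Longrightarrow> y \<in> frob_fixed N \<Longrightarrow> x + y \<in> frob_fixed N"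
  by (simp add: frob_fixed_def frobenius_add)

lemma frob_fixed_mult: "x \<in> frob_fixed N \<Longrightarrow> y \<in> frob_fixed N \<Longrightarrow> x * y \<in> frob_fixed N"
  by (simp add: frob_fixed_def power_mult_distrib)

lemma to_ac_mult_in_frob_fixed: "x \<in> frob_fixed N \<Longrightarrow> to_ac a * x \<in> frob_fixed N"
  by (simp add: frob_fixed_def power_mult_distrib frobenius_to_ac)

lemma frobenius_in_frob_fixed:
  fixes x :: "'a::{finite,field} alg_closure"
  assumes "x \<in> frob_fixed N"
  shows "x ^ (CARD('a) ^ j) \<in> frob_fixed N"
proof -
  have "(x ^ (CARD('a) ^ j)) ^ (CARD('a) ^ N) = (x ^ (CARD('a) ^ N)) ^ (CARD('a) ^ j)"
    by (simp flip: power_mult add: mult.commute)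
  then show ?thesis using assms by (simp add: frob_fixed_def)
qed

lemma card_frob_fixed:
  assumes "N \<ge> 1"
  shows "finite (frob_fixed N :: 'a::{finite,field} alg_closure set)"
    and "card (frob_fixed N :: 'a alg_closure set) = CARD('a) ^ N"
proof -
  define Q where "Q = CARD('a) ^ N"
  have "CARD('a) ^ 1 \<le> Q"
    unfolding Q_def using assms two_le_card_field[where 'a='a] by (intro power_increasing) auto
  then have "Q \<ge> 2" using two_le_card_field[where 'a='a] by simp
  define P :: "'a alg_closure poly" where "P = Polynomial.monom 1 Q - [:0, 1:]"
  have roots: "{x. poly P x = 0} = frob_fixed N"
    by (auto simp: P_def poly_monom frob_fixed_def Q_def)
  have "Polynomial.coeff P Q = 1"
    using \<open>Q \<ge> 2\<close> by (simp add: P_def coeff_monom coeff_pCons split: nat.split)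
  then have "P \<noteq> 0" by auto
  have "Polynomial.degree P = Q"
  proof (rule antisym)
    show "Polynomial.degree P \<le> Q"
      unfolding P_def by (rule degree_diff_le) (use \<open>Q \<ge> 2\<close> degree_monom_le in auto)
    show "Q \<le> Polynomial.degree P" using \<open>Polynomial.coeff P Q = 1\<close> by (intro le_degree) simp
  qed
  have "(of_nat Q :: 'a alg_closure) = to_ac (of_nat CARD('a) ^ N)"
    by (simp add: Q_def)
  also have "\<dots> = 0" using assms by (simp add: of_nat_card_eq_0)
  finally have "pderiv P = -1"
    by (simp add: P_def pderiv_diff pderiv_monom pderiv_pCons one_pCons)
  then have "card {x. poly P x = 0} = Q"
    using card_roots_eq_degree[OF \<open>P \<noteq> 0\<close>] \<open>Polynomial.degree P = Q\<close> by simp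
  then show "card (frob_fixed N :: 'a alg_closure set) = CARD('a) ^ N"
    using roots by (simp add: Q_def)
  show "finite (frob_fixed N :: 'a alg_closure set)"
    using poly_roots_finite[OF \<open>P \<noteq> 0\<close>] roots by simp
qed

definition base_indep :: "(nat \<Rightarrow> 'a::field alg_closure) \<Rightarrow> nat set \<Rightarrow> bool" where
  "base_indep v J \<longleftrightarrow> (\<forall>l::nat \<Rightarrow> 'a. (\<Sum>j\<in>J. to_ac (l j) * v j) = 0 \<longrightarrow> (\<forall>j\<in>J. l j = 0))"

definition base_span :: "(nat \<Rightarrow> 'a::field alg_closure) \<Rightarrow> nat set \<Rightarrow> 'a alg_closure set" where
  "base_span v J = range (\<lambda>l::nat \<Rightarrow> 'a. \<Sum>j\<in>J. to_ac (l j) * v j)"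

lemma base_spanI: "x = (\<Sum>j\<in>J. to_ac (l j) * v j) \<Longrightarrow> x \<in> base_span v J"
  unfolding base_span_def by blast

lemma base_span_eq_image:
  "base_span v J = (\<lambda>l::nat \<Rightarrow> 'a::field. \<Sum>j\<in>J. to_ac (l j) * v j) ` (J \<rightarrow>\<^sub>E UNIV)"
proof
  show "base_span v J \<subseteq> (\<lambda>l::nat \<Rightarrow> 'a. \<Sum>j\<in>J. to_ac (l j) * v j) ` (J \<rightarrow>\<^sub>E UNIV)"
  proof
    fix x assume "x \<in> base_span v J"
    then obtain l :: "nat \<Rightarrow> 'a" where "x = (\<Sum>j\<in>J. to_ac (l j) * v j)"
      by (auto simp: base_span_def)
    also have "\<dots> = (\<Sum>j\<in>J. to_ac (restrict l J j) * v j)" by (rule sum.cong) auto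
    finally show "x \<in> (\<lambda>l::nat \<Rightarrow> 'a. \<Sum>j\<in>J. to_ac (l j) * v j) ` (J \<rightarrow>\<^sub>E UNIV)"
      by (rule image_eqI[of _ _ "restrict l J"]) simp_all
  qed
qed (auto simp: base_span_def)

lemma finite_base_span:
  fixes v :: "nat \<Rightarrow> 'a::{finite,field} alg_closure"
  shows "finite J \<Longrightarrow> finite (base_span v J)"
  by (simp add: base_span_eq_image finite_PiE)

lemma card_base_span_le:
  fixes v :: "nat \<Rightarrow> 'a::{finite,field} alg_closure"
  assumes "finite J"
  shows "card (base_span v J) \<le> CARD('a) ^ card J"
proof -
  have "card (base_span v J) \<le> card (J \<rightarrow>\<^sub>E (UNIV :: 'a set))"
    unfolding base_span_eq_image by (rule card_image_le) (simp add: assms finite_PiE)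
  then show ?thesis using card_funcsetE[OF assms, of "UNIV :: 'a set"] by simp
qed

lemma base_indep_subset:
  assumes "base_indep v J" "I \<subseteq> J" "finite J"
  shows "base_indep v I"
  unfolding base_indep_def
proof (intro allI impI)
  fix l :: "nat \<Rightarrow> 'a" assume "(\<Sum>i\<in>I. to_ac (l i) * v i) = 0"
  moreover have "(\<Sum>j\<in>J. to_ac (if j \<in> I then l j else 0) * v j) = (\<Sum>i\<in>I. to_ac (l i) * v i)"
    using assms(2,3) by (intro sum.mono_neutral_cong_right) auto
  ultimately have "\<forall>j\<in>J. (if j \<in> I then l j else 0) = 0"
    using assms(1)[unfolded base_indep_def, rule_format, of "\<lambda>j. if j \<in> I then l j else 0"]
    by simp
  then show "\<forall>i\<in>I. l i = 0" using assms(2) by (metis (full_types) subsetD)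
qed

lemma sum_to_ac_swap:
  fixes x :: "'c \<Rightarrow> 'a::field" and z :: "'d \<Rightarrow> 'a alg_closure"
  shows "(\<Sum>a\<in>A. to_ac (x a) * (\<Sum>b\<in>B. to_ac (y a b) * z b))
    = (\<Sum>b\<in>B. to_ac (\<Sum>a\<in>A. x a * y a b) * z b)"
proof -
  have "(\<Sum>a\<in>A. to_ac (x a) * (\<Sum>b\<in>B. to_ac (y a b) * z b))
      = (\<Sum>a\<in>A. \<Sum>b\<in>B. to_ac (x a * y a b) * z b)"
    by (simp add: sum_distrib_left mult.assoc)
  also have "\<dots> = (\<Sum>b\<in>B. \<Sum>a\<in>A. to_ac (x a * y a b) * z b)" by (rule sum.swap)
  also have "\<dots> = (\<Sum>b\<in>B. to_ac (\<Sum>a\<in>A. x a * y a b) * z b)"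
    by (simp add: to_ac_sum sum_distrib_right)
  finally show ?thesis .
qed

lemma base_span_combination:
  fixes w :: "'c \<Rightarrow> 'a::field alg_closure" and \<mu> :: "'c \<Rightarrow> 'a"
  assumes "\<And>u. u \<in> U \<Longrightarrow> w u \<in> base_span v J"
  shows "(\<Sum>u\<in>U. to_ac (\<mu> u) * w u) \<in> base_span v J"
proof -
  have "\<forall>u\<in>U. \<exists>k::nat \<Rightarrow> 'a. w u = (\<Sum>j\<in>J. to_ac (k j) * v j)"
    using assms unfolding base_span_def by blast
  from bchoice[OF this] obtain \<kappa> :: "'c \<Rightarrow> nat \<Rightarrow> 'a"
    where \<kappa>: "\<forall>u\<in>U. w u = (\<Sum>j\<in>J. to_ac (\<kappa> u j) * v j)" by blast
  have "(\<Sum>u\<in>U. to_ac (\<mu> u) * w u) = (\<Sum>u\<in>U. to_ac (\<mu> u) * (\<Sum>j\<in>J. to_ac (\<kappa> u j) * v j))"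
    using \<kappa> by (intro sum.cong refl) simp
  also have "\<dots> = (\<Sum>j\<in>J. to_ac (\<Sum>u\<in>U. \<mu> u * \<kappa> u j) * v j)"
    by (rule sum_to_ac_swap)
  finally show ?thesis by (rule base_spanI)
qed

lemma in_base_span_if_dependent_insert:
  fixes v :: "nat \<Rightarrow> 'a::field alg_closure"
  assumes "base_indep v J" "finite J" "u \<notin> J" "\<not> base_indep v (insert u J)"
  shows "v u \<in> base_span v J"
proof -
  obtain l :: "nat \<Rightarrow> 'a" where l: "(\<Sum>j\<in>insert u J. to_ac (l j) * v j) = 0"
      "\<exists>j\<in>insert u J. l j \<noteq> 0"
    using assms(4) unfolding base_indep_def by blast
  have comb: "to_ac (l u) * v u + (\<Sum>j\<in>J. to_ac (l j) * v j) = 0"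
    using l(1) assms(2,3) by simp
  have "l u \<noteq> 0"
  proof
    assume "l u = 0"
    then have "\<forall>j\<in>J. l j = 0" using comb assms(1) unfolding base_indep_def by simp
    then show False using l(2) \<open>l u = 0\<close> by auto
  qed
  have "(\<Sum>j\<in>J. to_ac (- l j / l u) * v j) = - inverse (to_ac (l u)) * (\<Sum>j\<in>J. to_ac (l j) * v j)"
    unfolding sum_distrib_left by (rule sum.cong) (simp_all add: divide_inverse algebra_simps)
  also have "(\<Sum>j\<in>J. to_ac (l j) * v j) = - (to_ac (l u) * v u)"
    using comb by (simp add: eq_neg_iff_add_eq_0 add.commute)
  also have "- inverse (to_ac (l u)) * - (to_ac (l u) * v u) = v u"
    using \<open>l u \<noteq> 0\<close> by (simp add: field_simps)
  finally show ?thesis by (rule base_spanI[OF sym])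
qed

text \<open>A maximal independent subfamily spans the whole family.\<close>
lemma exists_base_indep_spanning:
  fixes v :: "nat \<Rightarrow> 'a::field alg_closure"
  assumes "finite U"
  shows "\<exists>J \<subseteq> U. base_indep v J \<and> (\<forall>u\<in>U. v u \<in> base_span v J)"
proof -
  have "{} \<subseteq> U \<and> base_indep v {}" by (simp add: base_indep_def)
  moreover have "\<forall>J. J \<subseteq> U \<and> base_indep v J \<longrightarrow> card J < card U + 1"
    using card_mono[OF assms] by (simp add: le_imp_less_Suc)
  ultimately have "\<exists>J. (J \<subseteq> U \<and> base_indep v J) \<and>
      (\<forall>J'. J' \<subseteq> U \<and> base_indep v J' \<longrightarrow> card J' \<le> card J)"
    by (rule Lattices_Big.ex_has_greatest_nat)
  then obtain J where J: "J \<subseteq> U" "base_indep v J"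
      and max: "\<And>J'. J' \<subseteq> U \<Longrightarrow> base_indep v J' \<Longrightarrow> card J' \<le> card J"
    by blast
  have "finite J" using J(1) assms finite_subset by blast
  have "v u \<in> base_span v J" if "u \<in> U" for u
  proof (cases "u \<in> J")
    case True
    have "(\<Sum>j\<in>J. to_ac (if j = u then 1 else 0) * v j) = (\<Sum>j\<in>J. if j = u then v j else 0)"
      by (rule sum.cong) auto
    also have "\<dots> = v u" using True \<open>finite J\<close> by simp
    finally show ?thesis by (rule base_spanI[OF sym])
  next
    case False
    have "\<not> base_indep v (insert u J)"
    proof
      assume "base_indep v (insert u J)"
      then have "card (insert u J) \<le> card J" using max J(1) that by blast
      then show False using False \<open>finite J\<close> by simp
    qed
    then show ?thesis using in_base_span_if_dependent_insert J(2) \<open>finite J\<close> False by blast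
  qed
  then show ?thesis using J by blast
qed

lemma frob_fixed_coordinates:
  assumes "N \<ge> 1"
  shows "\<exists>\<beta>. (\<forall>i<N. \<beta> i \<in> frob_fixed N) \<and> bij_betw (\<lambda>l. \<Sum>i<N. l i * \<beta> i)
    ({..<N} \<rightarrow>\<^sub>E range to_ac) (frob_fixed N :: 'a::{finite,field} alg_closure set)"
proof -
  define S where "S = range (to_ac :: 'a \<Rightarrow> 'a alg_closure)"
  have "card S = CARD('a)" unfolding S_def by (metis card_image inj_to_ac)
  have S: "finite S" "0 \<in> S" "1 \<in> S" unfolding S_def by (auto simp flip: to_ac_0 to_ac_1)
  have S_closed: "a - b \<in> S" "a * b \<in> S" if "a \<in> S" "b \<in> S" for a b
    using that unfolding S_def by (auto simp flip: to_ac_diff to_ac_mult)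
  have S_inverse: "inverse a \<in> S" if "a \<in> S" for a
    using that unfolding S_def by (auto simp flip: to_ac_inverse)
  have scale: "a * x \<in> frob_fixed N" if "a \<in> S" "x \<in> frob_fixed N" for a x
    using that to_ac_mult_in_frob_fixed by (auto simp: S_def)
  have "\<exists>(k::nat) \<beta>. (\<forall>i<k. \<beta> i \<in> frob_fixed N)
      \<and> bij_betw (\<lambda>l. \<Sum>i<k. l i * \<beta> i) ({..<k} \<rightarrow>\<^sub>E S) (frob_fixed N)"
    using exists_coordinates[OF S _ _ S_inverse card_frob_fixed(1)[OF assms] zero_in_frob_fixed
        frob_fixed_add scale] S_closed by blast
  then obtain k :: nat and \<beta> where \<beta>: "\<forall>i<k. \<beta> i \<in> frob_fixed N"
    and bij: "bij_betw (\<lambda>l. \<Sum>i<k. l i * \<beta> i) ({..<k} \<rightarrow>\<^sub>E S) (frob_fixed N)"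
    by blast
  have "CARD('a) ^ k = CARD('a) ^ N"
    using bij_betw_same_card[OF bij] card_frob_fixed(2)[OF assms] \<open>card S = CARD('a)\<close>
    by (simp add: card_funcsetE)
  then have "k = N" using two_le_card_field[where 'a='a] by (simp add: power_inject_exp)
  then show ?thesis using \<beta> bij unfolding S_def by blast
qed

lemma frob_fixed_basis:
  assumes "N \<ge> 1"
  shows "\<exists>\<beta>::nat \<Rightarrow> 'a::{finite,field} alg_closure. (\<forall>i<N. \<beta> i \<in> frob_fixed N)
    \<and> base_indep \<beta> {..<N} \<and> frob_fixed N \<subseteq> base_span \<beta> {..<N}"
proof -
  define S where "S = range (to_ac :: 'a \<Rightarrow> 'a alg_closure)"
  obtain \<beta> where \<beta>: "\<forall>i<N. \<beta> i \<in> frob_fixed N"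
    and bij: "bij_betw (\<lambda>l. \<Sum>i<N. l i * \<beta> i) ({..<N} \<rightarrow>\<^sub>E S) (frob_fixed N)"
    using frob_fixed_coordinates[OF assms] unfolding S_def by blast
  have "0 \<in> S" unfolding S_def by (metis rangeI to_ac_0)
  have inj: "inj_on (\<lambda>l. \<Sum>i<N. l i * \<beta> i) ({..<N} \<rightarrow>\<^sub>E S)"
    and image: "(\<lambda>l. \<Sum>i<N. l i * \<beta> i) ` ({..<N} \<rightarrow>\<^sub>E S) = frob_fixed N"
    using bij by (simp_all add: bij_betw_def)
  have indep: "base_indep \<beta> {..<N}"
    unfolding base_indep_def
  proof (intro allI impI ballI)
    fix u :: "nat \<Rightarrow> 'a" and i assume z: "(\<Sum>i\<in>{..<N}. to_ac (u i) * \<beta> i) = 0" and "i \<in> {..<N}"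
    have "(\<Sum>i<N. restrict (to_ac \<circ> u) {..<N} i * \<beta> i) = (\<Sum>i<N. restrict (\<lambda>_. 0) {..<N} i * \<beta> i)"
      using z by simp
    moreover have "restrict (to_ac \<circ> u) {..<N} \<in> {..<N} \<rightarrow>\<^sub>E S" "restrict (\<lambda>_. 0) {..<N} \<in> {..<N} \<rightarrow>\<^sub>E S"
      using \<open>0 \<in> S\<close> by (auto simp: S_def)
    ultimately have "restrict (to_ac \<circ> u) {..<N} = restrict (\<lambda>_. 0) {..<N}"
      by (rule inj_onD[OF inj])
    then show "u i = 0" using \<open>i \<in> {..<N}\<close> by (metis comp_apply restrict_apply' to_ac_eq_0_iff)
  qed
  have "y \<in> base_span \<beta> {..<N}" if "y \<in> frob_fixed N" for y
  proof -
    obtain l where l: "l \<in> {..<N} \<rightarrow>\<^sub>E S" "y = (\<Sum>i<N. l i * \<beta> i)"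
      using image \<open>y \<in> frob_fixed N\<close> by blast
    have "l i \<in> range to_ac" if "i \<in> {..<N}" for i
      using PiE_mem[OF l(1) that] unfolding S_def .
    then have "y = (\<Sum>i\<in>{..<N}. to_ac (of_ac (l i)) * \<beta> i)"
      unfolding l(2) by (intro sum.cong) (simp_all add: to_ac_of_ac)
    then show ?thesis by (rule base_spanI)
  qed
  then show ?thesis using \<beta> indep by blast
qed

text \<open>\<open>q\<close>-linearized polynomials; the Gabidulin codewords are their coefficient vectors \<open>c\<close>.\<close>
definition linearized :: "nat \<Rightarrow> (nat \<Rightarrow> 'a::{finite,field} alg_closure) \<Rightarrow> 'a alg_closure \<Rightarrow> 'a alg_closure" where
  "linearized s c x = (\<Sum>j<s. c j * x ^ (CARD('a) ^ j))"

lemma linearized_base_combination: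
  "linearized s c (\<Sum>i\<in>I. to_ac (l i) * x i) = (\<Sum>i\<in>I. to_ac (l i) * linearized s c (x i))"
proof (induction I rule: infinite_finite_induct)
  case (insert i I)
  have "linearized s c (x + y) = linearized s c x + linearized s c y" for x y
    by (simp add: linearized_def frobenius_add distrib_left sum.distrib)
  moreover have "linearized s c (to_ac a * x) = to_ac a * linearized s c x" for a x
    by (simp add: linearized_def power_mult_distrib frobenius_to_ac sum_distrib_left mult.left_commute)
  ultimately show ?case using insert by simp
qed (simp_all add: linearized_def zero_power)

lemma linearized_diff_coeffs:
  "linearized s c x - linearized s c' x = linearized s (\<lambda>j. c j - c' j) x"
  by (simp add: linearized_def sum_subtractf left_diff_distrib)

lemma linearized_in_frob_fixed:
  "(\<And>j. j < s \<Longrightarrow> c j \<in> frob_fixed N) \<Longrightarrow> x \<in> frob_fixed N \<Longrightarrow> linearized s c x \<in> frob_fixed N"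
  unfolding linearized_def
  by (rule sum_in_closed_set[OF zero_in_frob_fixed frob_fixed_add])
    (auto intro: frob_fixed_mult frobenius_in_frob_fixed)

lemma card_linearized_roots_le:
  fixes c :: "nat \<Rightarrow> 'a::{finite,field} alg_closure"
  assumes "j0 < s" "c j0 \<noteq> 0"
  shows "finite {x. linearized s c x = 0}" and "card {x. linearized s c x = 0} \<le> CARD('a) ^ (s - 1)"
proof -
  define q where "q = CARD('a)"
  have "q \<ge> 2" unfolding q_def by (rule two_le_card_field)
  define P where "P = (\<Sum>j<s. Polynomial.monom (c j) (q ^ j))"
  have roots: "{x. linearized s c x = 0} = {x. poly P x = 0}"
    by (simp add: P_def linearized_def poly_sum poly_monom q_def)
  have "Polynomial.coeff P (q ^ j0) = (\<Sum>j<s. if j = j0 then c j else 0)"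
    unfolding P_def Polynomial.coeff_sum using \<open>q \<ge> 2\<close>
    by (intro sum.cong) (auto simp: coeff_monom power_inject_exp)
  then have "Polynomial.coeff P (q ^ j0) \<noteq> 0" using assms by simp
  then have "P \<noteq> 0" by auto
  have "Polynomial.degree P \<le> q ^ (s - 1)"
    unfolding P_def
  proof (rule degree_sum_le)
    fix j assume "j \<in> {..<s}"
    then have "q ^ j \<le> q ^ (s - 1)" using \<open>q \<ge> 2\<close> by (intro power_increasing) auto
    then show "Polynomial.degree (Polynomial.monom (c j) (q ^ j)) \<le> q ^ (s - 1)"
      using degree_monom_le order_trans by blast
  qed simp
  then show "card {x. linearized s c x = 0} \<le> CARD('a) ^ (s - 1)"
    using card_poly_roots_bound[OF \<open>P \<noteq> 0\<close>] roots unfolding q_def by simp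
  show "finite {x. linearized s c x = 0}" using poly_roots_finite[OF \<open>P \<noteq> 0\<close>] roots by simp
qed

lemma base_indep_coeffs_eq:
  assumes "base_indep \<beta> I" "finite I"
    and "(\<Sum>i\<in>I. to_ac (a i) * \<beta> i) = (\<Sum>i\<in>I. to_ac (b i) * \<beta> i)"
  shows "\<forall>i\<in>I. a i = b i"
proof -
  have "(\<Sum>i\<in>I. to_ac (a i - b i) * \<beta> i) = 0"
    using assms(3) by (simp add: left_diff_distrib sum_subtractf)
  then show ?thesis using assms(1) unfolding base_indep_def by fastforce
qed

definition indep_rows :: "(nat \<Rightarrow> nat \<Rightarrow> 'a::field) \<Rightarrow> nat set \<Rightarrow> nat set \<Rightarrow> bool" where
  "indep_rows D I K \<longleftrightarrow> (\<forall>l. (\<forall>k\<in>K. (\<Sum>i\<in>I. l i * D i k) = 0) \<longrightarrow> (\<forall>i\<in>I. l i = 0))"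

text \<open>Row and column witnesses for rank at least \<open>r\<close> of the \<open>M \<times> N\<close> matrix \<open>D\<close>; the lift in the
  last step needs both.\<close>
definition rank_at_least :: "(nat \<Rightarrow> nat \<Rightarrow> 'a::field) \<Rightarrow> nat \<Rightarrow> nat \<Rightarrow> nat \<Rightarrow> bool" where
  "rank_at_least D M N r \<longleftrightarrow>
     (\<exists>I \<subseteq> {..<M}. r \<le> card I \<and> indep_rows D I {..<N}) \<and>
     (\<exists>K \<subseteq> {..<N}. r \<le> card K \<and> indep_rows (\<lambda>k i. D i k) K {..<M})"

lemma indep_rows_mono: "indep_rows D I K \<Longrightarrow> K \<subseteq> K' \<Longrightarrow> indep_rows D I K'"
  unfolding indep_rows_def by blast

lemma indep_rows_if_base_expansion:
  assumes "base_indep w I" "\<And>i. i \<in> I \<Longrightarrow> w i = (\<Sum>k\<in>K. to_ac (D i k) * \<beta> k)"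
  shows "indep_rows D I K"
  unfolding indep_rows_def
proof (intro allI impI)
  fix l assume "\<forall>k\<in>K. (\<Sum>i\<in>I. l i * D i k) = 0"
  moreover have "(\<Sum>i\<in>I. to_ac (l i) * w i) = (\<Sum>k\<in>K. to_ac (\<Sum>i\<in>I. l i * D i k) * \<beta> k)"
    using assms(2) by (simp add: sum_to_ac_swap)
  ultimately have "(\<Sum>i\<in>I. to_ac (l i) * w i) = 0" by simp
  then show "\<forall>i\<in>I. l i = 0" using assms(1) unfolding base_indep_def by blast
qed

text \<open>More unknowns than equations: the linear map \<open>\<eta> \<mapsto> \<eta> D\<close> from \<open>'a ^ I\<close> to \<open>'a ^ K\<close> is not
  injective because its domain is larger.\<close>
lemma exists_nonzero_left_kernel_vector:
  fixes D :: "nat \<Rightarrow> nat \<Rightarrow> 'a::{finite,field}"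
  assumes "finite I" "finite K" "card K < card I"
  shows "\<exists>\<eta>. (\<exists>i\<in>I. \<eta> i \<noteq> 0) \<and> (\<forall>k\<in>K. (\<Sum>i\<in>I. \<eta> i * D i k) = 0)"
proof -
  define \<psi> where "\<psi> \<nu> = restrict (\<lambda>k. \<Sum>i\<in>I. \<nu> i * D i k) K" for \<nu> :: "nat \<Rightarrow> 'a"
  have "CARD('a) ^ card K < CARD('a) ^ card I"
    using assms(3) two_le_card_field[where 'a='a] by (simp add: power_strict_increasing)
  then have smaller: "card (K \<rightarrow>\<^sub>E (UNIV :: 'a set)) < card (I \<rightarrow>\<^sub>E (UNIV :: 'a set))"
    using assms(1,2) by (simp add: card_funcsetE)
  have "\<not> inj_on \<psi> (I \<rightarrow>\<^sub>E UNIV)"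
  proof
    assume "inj_on \<psi> (I \<rightarrow>\<^sub>E UNIV)"
    moreover have "\<psi> ` (I \<rightarrow>\<^sub>E UNIV) \<subseteq> K \<rightarrow>\<^sub>E UNIV" by (auto simp: \<psi>_def)
    moreover have "finite (K \<rightarrow>\<^sub>E (UNIV :: 'a set))" using assms(2) by (simp add: finite_PiE)
    ultimately show False using card_inj_on_le smaller by (metis not_le)
  qed
  then obtain \<nu> \<nu>' where \<nu>: "\<nu> \<in> I \<rightarrow>\<^sub>E UNIV" "\<nu>' \<in> I \<rightarrow>\<^sub>E UNIV" "\<psi> \<nu> = \<psi> \<nu>'" "\<nu> \<noteq> \<nu>'"
    unfolding inj_on_def by blast
  then obtain i0 where "i0 \<in> I" "\<nu> i0 \<noteq> \<nu>' i0" by (meson PiE_ext)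
  moreover have "(\<Sum>i\<in>I. (\<nu> i - \<nu>' i) * D i k) = 0" if "k \<in> K" for k
  proof -
    have "(\<Sum>i\<in>I. \<nu> i * D i k) = (\<Sum>i\<in>I. \<nu>' i * D i k)"
      using fun_cong[OF \<nu>(3), of k] that by (simp add: \<psi>_def)
    then show ?thesis by (simp add: left_diff_distrib sum_subtractf)
  qed
  ultimately show ?thesis by (intro exI[of _ "\<lambda>i. \<nu> i - \<nu>' i"]) auto
qed

text \<open>Row rank is at most column rank. The independent family \<open>\<beta>\<close> merely embeds the columns of
  \<open>D\<close>, viewed as vectors indexed by \<open>I\<close>, into the algebraic closure.\<close>
lemma exists_independent_columns:
  fixes \<beta> :: "nat \<Rightarrow> 'a::{finite,field} alg_closure" and D :: "nat \<Rightarrow> nat \<Rightarrow> 'a"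
  assumes "finite I" "base_indep \<beta> I" and rows: "indep_rows D I {..<N}"
  shows "\<exists>K \<subseteq> {..<N}. card I \<le> card K \<and> indep_rows (\<lambda>k i. D i k) K I"
proof -
  define u where "u k = (\<Sum>i\<in>I. to_ac (D i k) * \<beta> i)" for k
  obtain K where K: "K \<subseteq> {..<N}" "base_indep u K" "\<forall>k\<in>{..<N}. u k \<in> base_span u K"
    using exists_base_indep_spanning[of "{..<N}" u] by blast
  have columns: "indep_rows (\<lambda>k i. D i k) K I"
    by (rule indep_rows_if_base_expansion[OF K(2)]) (simp add: u_def)
  have "card I \<le> card K"
  proof (rule ccontr)
    have "finite K" using K(1) finite_subset by blast
    assume "\<not> card I \<le> card K"
    then have "card K < card I" by simp
    then obtain \<eta> where \<eta>: "\<exists>i\<in>I. \<eta> i \<noteq> 0" "\<forall>k\<in>K. (\<Sum>i\<in>I. \<eta> i * D i k) = 0"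
      using exists_nonzero_left_kernel_vector[OF assms(1) \<open>finite K\<close>] by blast
    have "(\<Sum>i\<in>I. \<eta> i * D i k) = 0" if "k < N" for k
    proof -
      obtain \<kappa> :: "nat \<Rightarrow> 'a" where "u k = (\<Sum>k'\<in>K. to_ac (\<kappa> k') * u k')"
        using K(3) \<open>k < N\<close> unfolding base_span_def by blast
      also have "\<dots> = (\<Sum>i\<in>I. to_ac (\<Sum>k'\<in>K. \<kappa> k' * D i k') * \<beta> i)"
        unfolding u_def by (rule sum_to_ac_swap)
      finally have "\<forall>i\<in>I. D i k = (\<Sum>k'\<in>K. \<kappa> k' * D i k')"
        unfolding u_def by (rule base_indep_coeffs_eq[OF assms(2,1)])
      then have "(\<Sum>i\<in>I. \<eta> i * D i k) = (\<Sum>i\<in>I. \<eta> i * (\<Sum>k'\<in>K. \<kappa> k' * D i k'))"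
        by (intro sum.cong refl) simp
      also have "\<dots> = (\<Sum>i\<in>I. \<Sum>k'\<in>K. \<kappa> k' * (\<eta> i * D i k'))"
        by (simp add: sum_distrib_left mult.left_commute)
      also have "\<dots> = (\<Sum>k'\<in>K. \<Sum>i\<in>I. \<kappa> k' * (\<eta> i * D i k'))"
        by (rule sum.swap)
      also have "\<dots> = (\<Sum>k'\<in>K. \<kappa> k' * (\<Sum>i\<in>I. \<eta> i * D i k'))"
        by (simp add: sum_distrib_left)
      also have "\<dots> = 0" using \<eta>(2) by simp
      finally show ?thesis .
    qed
    then show False using rows \<eta>(1) unfolding indep_rows_def by blast
  qed
  then show ?thesis using K(1) columns by blast
qed

lemma card_linearized_fibre_le:
  fixes \<beta> d :: "nat \<Rightarrow> 'a::{finite,field} alg_closure" and s \<tau> :: nat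
  defines "\<phi> \<equiv> \<lambda>l. \<Sum>i<\<tau>. to_ac (l i) * linearized s d (\<beta> i)"
  assumes "base_indep \<beta> {..<\<tau>}" "finite {x. linearized s d x = 0}"
  shows "card {l \<in> {..<\<tau>} \<rightarrow>\<^sub>E UNIV. \<phi> l = y} \<le> card {x. linearized s d x = 0}"
proof (cases "\<exists>l0 \<in> {..<\<tau>} \<rightarrow>\<^sub>E UNIV. \<phi> l0 = y")
  case True
  then obtain l0 where l0: "l0 \<in> {..<\<tau>} \<rightarrow>\<^sub>E UNIV" "\<phi> l0 = y" by blast
  define g where "g l = (\<Sum>i<\<tau>. to_ac (l i - l0 i) * \<beta> i)" for l :: "nat \<Rightarrow> 'a"
  have "inj_on g {l \<in> {..<\<tau>} \<rightarrow>\<^sub>E UNIV. \<phi> l = y}"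
  proof (rule inj_onI)
    fix l l' assume "l \<in> {l \<in> {..<\<tau>} \<rightarrow>\<^sub>E UNIV. \<phi> l = y}" "l' \<in> {l \<in> {..<\<tau>} \<rightarrow>\<^sub>E UNIV. \<phi> l = y}"
      and "g l = g l'"
    moreover from \<open>g l = g l'\<close> have "\<forall>i\<in>{..<\<tau>}. l i - l0 i = l' i - l0 i"
      unfolding g_def by (intro base_indep_coeffs_eq[OF assms(2)]) simp_all
    ultimately show "l = l'" by (intro PiE_ext[of l "{..<\<tau>}" "\<lambda>_. UNIV"]) auto
  qed
  moreover have "linearized s d (g l) = 0" if "\<phi> l = y" for l
  proof -
    have "linearized s d (g l) = (\<Sum>i<\<tau>. to_ac (l i - l0 i) * linearized s d (\<beta> i))"
      unfolding g_def by (rule linearized_base_combination)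
    also have "\<dots> = \<phi> l - \<phi> l0"
      unfolding \<phi>_def by (simp add: left_diff_distrib flip: sum_subtractf)
    finally show ?thesis using that l0(2) by simp
  qed
  then have "g ` {l \<in> {..<\<tau>} \<rightarrow>\<^sub>E UNIV. \<phi> l = y} \<subseteq> {x. linearized s d x = 0}" by auto
  ultimately show ?thesis using card_inj_on_le assms(3) by blast
next
  case False
  then have "{l \<in> {..<\<tau>} \<rightarrow>\<^sub>E UNIV. \<phi> l = y} = {}" by blast
  then show ?thesis unfolding \<open>_ = {}\<close> by simp
qed

lemma exists_independent_linearized_values:
  fixes \<beta> :: "nat \<Rightarrow> 'a::{finite,field} alg_closure"
  assumes "base_indep \<beta> {..<\<tau>}" "j0 < s" "d j0 \<noteq> 0" "s \<le> \<tau>"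
  shows "\<exists>I \<subseteq> {..<\<tau>}. \<tau> - s + 1 \<le> card I \<and> base_indep (\<lambda>i. linearized s d (\<beta> i)) I"
proof -
  define q where "q = CARD('a)"
  define w where "w i = linearized s d (\<beta> i)" for i
  define \<phi> where "\<phi> l = (\<Sum>i<\<tau>. to_ac (l i) * w i)" for l :: "nat \<Rightarrow> 'a"
  define \<Lambda> where "\<Lambda> = {..<\<tau>} \<rightarrow>\<^sub>E (UNIV :: 'a set)"
  obtain I where I: "I \<subseteq> {..<\<tau>}" "base_indep w I" "\<forall>i\<in>{..<\<tau>}. w i \<in> base_span w I"
    using exists_base_indep_spanning[of "{..<\<tau>}" w] by blast
  have "finite I" using I(1) finite_subset by blast
  have "\<phi> ` \<Lambda> \<subseteq> base_span w I"
    unfolding \<phi>_def using I(3) by (auto intro: base_span_combination)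
  then have image: "card (\<phi> ` \<Lambda>) \<le> q ^ card I"
    using card_mono[OF finite_base_span[OF \<open>finite I\<close>]] card_base_span_le[OF \<open>finite I\<close>, of w]
    unfolding q_def by (meson order_trans)
  have fibre: "card {l \<in> \<Lambda>. \<phi> l = y} \<le> q ^ (s - 1)" for y
    using card_linearized_fibre_le[OF assms(1) card_linearized_roots_le(1)[of j0 s d, OF assms(2,3)], of y]
      card_linearized_roots_le(2)[of j0 s d, OF assms(2,3)]
    unfolding \<Lambda>_def \<phi>_def w_def q_def by linarith
  have "finite \<Lambda>" by (simp add: \<Lambda>_def finite_PiE)
  have "q ^ \<tau> = card \<Lambda>" by (simp add: \<Lambda>_def q_def card_funcsetE)
  also have "\<dots> = card (\<Union>y\<in>\<phi> ` \<Lambda>. {l \<in> \<Lambda>. \<phi> l = y})" by (rule arg_cong[where f = card]) blast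
  also have "\<dots> \<le> (\<Sum>y\<in>\<phi> ` \<Lambda>. card {l \<in> \<Lambda>. \<phi> l = y})"
    by (rule card_UN_le) (simp add: \<open>finite \<Lambda>\<close>)
  also have "\<dots> \<le> card (\<phi> ` \<Lambda>) * q ^ (s - 1)"
    using sum_bounded_above[of "\<phi> ` \<Lambda>" _ "q ^ (s - 1)"] fibre by simp
  also have "\<dots> \<le> q ^ (card I + (s - 1))"
    using image by (simp add: power_add)
  finally have "\<tau> \<le> card I + (s - 1)"
    using two_le_card_field[where 'a='a] by (simp add: q_def power_le_imp_le_exp)
  then show ?thesis using I(1,2) assms(2,4) unfolding w_def by (intro exI[of _ I]) auto
qed

lemma rank_at_least_linearized_expansion:
  fixes \<beta> :: "nat \<Rightarrow> 'a::{finite,field} alg_closure" and D :: "nat \<Rightarrow> nat \<Rightarrow> 'a"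
  assumes \<beta>: "base_indep \<beta> {..<N}" and "\<tau> \<le> N" "j0 < s" "d j0 \<noteq> 0" "s \<le> \<tau>"
    and expand: "\<And>i. i < \<tau> \<Longrightarrow> linearized s d (\<beta> i) = (\<Sum>k<N. to_ac (D i k) * \<beta> k)"
  shows "rank_at_least D \<tau> N (\<tau> - s + 1)"
proof -
  have "base_indep \<beta> {..<\<tau>}"
    by (rule base_indep_subset[OF \<beta>]) (use \<open>\<tau> \<le> N\<close> in auto)
  then obtain I where I: "I \<subseteq> {..<\<tau>}" "\<tau> - s + 1 \<le> card I"
      "base_indep (\<lambda>i. linearized s d (\<beta> i)) I"
    using exists_independent_linearized_values[of \<beta> \<tau> j0 s d] assms(3-5) by blast
  have "finite I" using I(1) by (rule finite_subset) simp
  have rows: "indep_rows D I {..<N}"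
    by (rule indep_rows_if_base_expansion[OF I(3)]) (use I(1) expand in auto)
  have "base_indep \<beta> I"
    by (rule base_indep_subset[OF \<beta>]) (use I(1) \<open>\<tau> \<le> N\<close> in auto)
  then obtain K where K: "K \<subseteq> {..<N}" "card I \<le> card K" "indep_rows (\<lambda>k i. D i k) K I"
    using exists_independent_columns[OF \<open>finite I\<close> _ rows] by blast
  have "indep_rows (\<lambda>k i. D i k) K {..<\<tau>}" using K(3) I(1) by (rule indep_rows_mono)
  moreover have "\<tau> - s + 1 \<le> card K" using I(2) K(2) by linarith
  ultimately show ?thesis using I(1,2) rows K(1) unfolding rank_at_least_def by blast
qed

text \<open>Gabidulin code of length \<open>N\<close> over the field with \<open>CARD('a) ^ N\<close> elements: the codeword
  \<open>c\<close> is evaluated at \<open>\<tau>\<close> independent points, giving the \<open>\<tau> \<times> N\<close> matrix \<open>A c\<close> of coordinates.\<close>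
lemma exists_gabidulin_matrices:
  assumes "1 \<le> s" "s \<le> \<tau>" "\<tau> \<le> N"
  shows "\<exists>(M :: (nat \<Rightarrow> 'a::{finite,field} alg_closure) set) (A :: _ \<Rightarrow> nat \<Rightarrow> nat \<Rightarrow> 'a).
    card M = CARD('a) ^ (N * s) \<and>
    (\<forall>c\<in>M. \<forall>c'\<in>M. c \<noteq> c' \<longrightarrow> rank_at_least (\<lambda>i k. A c i k - A c' i k) \<tau> N (\<tau> - s + 1))"
proof -
  have "N \<ge> 1" using assms by simp
  obtain \<beta> :: "nat \<Rightarrow> 'a alg_closure" where \<beta>: "\<forall>i<N. \<beta> i \<in> frob_fixed N"
      "base_indep \<beta> {..<N}" "frob_fixed N \<subseteq> base_span \<beta> {..<N}"
    using frob_fixed_basis[OF \<open>N \<ge> 1\<close>] by blast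
  define M where "M = {..<s} \<rightarrow>\<^sub>E (frob_fixed N :: 'a alg_closure set)"
  define A where
    "A c i = (SOME u. linearized s c (\<beta> i) = (\<Sum>k<N. to_ac (u k) * \<beta> k))" for c i
  have A: "linearized s c (\<beta> i) = (\<Sum>k<N. to_ac (A c i k) * \<beta> k)" if "c \<in> M" "i < \<tau>" for c i
  proof -
    have "c j \<in> frob_fixed N" if "j < s" for j
      using PiE_mem[OF \<open>c \<in> M\<close>[unfolded M_def]] that by simp
    moreover have "\<beta> i \<in> frob_fixed N" using \<beta>(1) \<open>i < \<tau>\<close> assms(3) by simp
    ultimately have "linearized s c (\<beta> i) \<in> base_span \<beta> {..<N}"
      using \<beta>(3) linearized_in_frob_fixed by blast
    then have "\<exists>u. linearized s c (\<beta> i) = (\<Sum>k<N. to_ac (u k) * \<beta> k)"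
      unfolding base_span_def by blast
    then show ?thesis unfolding A_def by (rule someI_ex)
  qed
  have "card M = card (frob_fixed N :: 'a alg_closure set) ^ s"
    by (simp add: M_def card_funcsetE)
  also have "\<dots> = CARD('a) ^ (N * s)"
    using card_frob_fixed(2)[OF \<open>N \<ge> 1\<close>, where 'a='a] by (simp add: power_mult)
  finally have card: "card M = CARD('a) ^ (N * s)" .
  have rank: "rank_at_least (\<lambda>i k. A c i k - A c' i k) \<tau> N (\<tau> - s + 1)"
    if "c \<in> M" "c' \<in> M" "c \<noteq> c'" for c c'
  proof -
    have "\<exists>j\<in>{..<s}. c j \<noteq> c' j"
      using that unfolding M_def by (meson PiE_ext)
    then obtain j0 where "j0 < s" "c j0 \<noteq> c' j0" by blast
    define d where "d j = c j - c' j" for j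
    have "d j0 \<noteq> 0" using \<open>c j0 \<noteq> c' j0\<close> by (simp add: d_def)
    have "linearized s d (\<beta> i) = (\<Sum>k<N. to_ac (A c i k - A c' i k) * \<beta> k)" if "i < \<tau>" for i
    proof -
      have "linearized s d (\<beta> i) = linearized s c (\<beta> i) - linearized s c' (\<beta> i)"
        unfolding d_def by (rule linearized_diff_coeffs[symmetric])
      also have "\<dots> = (\<Sum>k<N. to_ac (A c i k) * \<beta> k) - (\<Sum>k<N. to_ac (A c' i k) * \<beta> k)"
        by (simp only: A[OF \<open>c \<in> M\<close> that] A[OF \<open>c' \<in> M\<close> that])
      also have "\<dots> = (\<Sum>k<N. to_ac (A c i k - A c' i k) * \<beta> k)"
        by (simp add: left_diff_distrib flip: sum_subtractf)
      finally show ?thesis .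
    qed
    then show ?thesis
      by (rule rank_at_least_linearized_expansion[where d = d, OF \<beta>(2) assms(3) \<open>j0 < s\<close> \<open>d j0 \<noteq> 0\<close> assms(2)])
  qed
  show ?thesis
    by (intro exI[of _ M] exI[of _ A] conjI card) (use rank in blast)
qed

lemma rank_zero_matrix: "rank (0 :: 'a::field^'n::finite^'m::finite) = 0"
proof -
  have "rows (0 :: 'a^'n^'m) = {0}" by (auto simp: rows_def row_def vec_eq_iff)
  then show ?thesis by (simp add: row_rank_def_gen)
qed

lemma rank_le_if_rows_in_span:
  fixes Y :: "'a::field^'n::finite^'m::finite"
  assumes "rows Y \<subseteq> vec.span R" "finite R" "card R \<le> k"
  shows "rank Y \<le> k"
  using vec.dim_le_card[OF assms(1,2)] assms(3) by (simp add: row_rank_def_gen)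

lemma card_le_rank_if_rows_indep:
  fixes D :: "'a::field^'n::finite^'m::finite" and P :: "'m set"
  assumes indep: "\<And>f. (\<Sum>\<rho>\<in>P. f \<rho> *s row \<rho> D) = 0 \<Longrightarrow> \<forall>\<rho>\<in>P. f \<rho> = 0"
  shows "card P \<le> rank D"
proof -
  have inj: "inj_on (\<lambda>\<rho>. row \<rho> D) P"
  proof (rule inj_onI, rule ccontr)
    fix \<rho>1 \<rho>2 assume "\<rho>1 \<in> P" "\<rho>2 \<in> P" "row \<rho>1 D = row \<rho>2 D" "\<rho>1 \<noteq> \<rho>2"
    define f where "f \<rho> = (if \<rho> = \<rho>1 then 1 else if \<rho> = \<rho>2 then -1 else (0::'a))" for \<rho>
    have "(\<Sum>\<rho>\<in>P. f \<rho> *s row \<rho> D)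
        = (\<Sum>\<rho>\<in>P. (if \<rho> = \<rho>1 then row \<rho> D else 0) - (if \<rho> = \<rho>2 then row \<rho> D else 0))"
      by (rule sum.cong) (use \<open>\<rho>1 \<noteq> \<rho>2\<close> in \<open>auto simp: f_def\<close>)
    also have "\<dots> = 0"
      using \<open>\<rho>1 \<in> P\<close> \<open>\<rho>2 \<in> P\<close> \<open>row \<rho>1 D = row \<rho>2 D\<close> by (simp add: sum_subtractf)
    finally have "f \<rho>1 = 0" using indep \<open>\<rho>1 \<in> P\<close> by blast
    then show False by (simp add: f_def)
  qed
  have "vec.independent ((\<lambda>\<rho>. row \<rho> D) ` P)"
  proof (rule vec.independent_if_scalars_zero)
    fix f x assume sum: "(\<Sum>x\<in>(\<lambda>\<rho>. row \<rho> D) ` P. f x *s x) = 0" and "x \<in> (\<lambda>\<rho>. row \<rho> D) ` P"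
    have "(\<Sum>\<rho>\<in>P. f (row \<rho> D) *s row \<rho> D) = 0"
      using sum by (simp add: sum.reindex[OF inj])
    then show "f x = 0" using indep[of "\<lambda>\<rho>. f (row \<rho> D)"] \<open>x \<in> _\<close> by blast
  qed simp
  moreover have "(\<lambda>\<rho>. row \<rho> D) ` P \<subseteq> rows D" by (auto simp: rows_def)
  ultimately have "card ((\<lambda>\<rho>. row \<rho> D) ` P) \<le> rank D"
    unfolding row_rank_def_gen by (intro vec.independent_card_le_dim)
  then show ?thesis using card_image[OF inj] by simp
qed

definition nat_matrix :: "('m \<Rightarrow> nat) \<Rightarrow> ('n \<Rightarrow> nat) \<Rightarrow> (nat \<Rightarrow> nat \<Rightarrow> 'a) \<Rightarrow> 'a^'n^'m" where
  "nat_matrix em en G = (\<chi> \<rho> \<kappa>. G (em \<rho>) (en \<kappa>))"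

lemma nat_matrix_diff:
  "nat_matrix em en G - nat_matrix em en G' = nat_matrix em en (\<lambda>u v. G u v - G' u v)"
  by (simp add: nat_matrix_def vec_eq_iff)

lemma rank_nat_matrix_le:
  fixes em :: "'m::finite \<Rightarrow> nat" and en :: "'n::finite \<Rightarrow> nat" and G :: "nat \<Rightarrow> nat \<Rightarrow> 'a::field"
  assumes em: "bij_betw em UNIV {..<m}" and "\<tau> \<le> m"
    and comb: "\<And>u. \<exists>c. \<forall>v. G u v = (\<Sum>i<\<tau>. c i * G i v)"
  shows "rank (nat_matrix em en G) \<le> \<tau>"
proof (rule rank_le_if_rows_in_span)
  define emi where "emi = inv_into UNIV em"
  have em_emi: "em (emi i) = i" if "i < m" for i
    using bij_betw_inv_into_right[OF em] that by (simp add: emi_def)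
  define R where "R = (\<lambda>i. row (emi i) (nat_matrix em en G)) ` {..<\<tau>}"
  show "finite R" "card R \<le> \<tau>"
    unfolding R_def using card_image_le[of "{..<\<tau>}"] by auto
  show "rows (nat_matrix em en G) \<subseteq> vec.span R"
  proof
    fix x assume "x \<in> rows (nat_matrix em en G)"
    then obtain \<rho> where x: "x = row \<rho> (nat_matrix em en G)" by (auto simp: rows_def)
    obtain c where c: "\<forall>v. G (em \<rho>) v = (\<Sum>i<\<tau>. c i * G i v)" using comb by blast
    have "x = (\<Sum>i<\<tau>. c i *s row (emi i) (nat_matrix em en G))"
      unfolding vec_eq_iff
    proof
      fix \<kappa>
      have "(\<Sum>i<\<tau>. c i *s row (emi i) (nat_matrix em en G)) $ \<kappa> = (\<Sum>i<\<tau>. c i * G i (en \<kappa>))"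
        unfolding sum_component using \<open>\<tau> \<le> m\<close>
        by (intro sum.cong) (auto simp: row_def nat_matrix_def em_emi)
      then show "x $ \<kappa> = (\<Sum>i<\<tau>. c i *s row (emi i) (nat_matrix em en G)) $ \<kappa>"
        using c by (simp add: x row_def nat_matrix_def)
    qed
    also have "\<dots> \<in> vec.span R"
      by (intro vec.span_sum vec.span_scale vec.span_base) (auto simp: R_def)
    finally show "x \<in> vec.span R" .
  qed
qed

lemma card_le_rank_nat_matrix:
  fixes em :: "'m::finite \<Rightarrow> nat" and en :: "'n::finite \<Rightarrow> nat" and G :: "nat \<Rightarrow> nat \<Rightarrow> 'a::field"
  assumes em: "bij_betw em UNIV {..<m}" and en: "bij_betw en UNIV {..<n}"
    and "P \<subseteq> {..<m}" and indep: "indep_rows G P {..<n}"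
  shows "card P \<le> rank (nat_matrix em en G)"
proof -
  define emi where "emi = inv_into UNIV em"
  have em_emi: "em (emi i) = i" if "i < m" for i
    using bij_betw_inv_into_right[OF em] that by (simp add: emi_def)
  have "inj_on emi P"
    using \<open>P \<subseteq> {..<m}\<close> em_emi by (intro inj_on_inverseI[where g = em]) auto
  have "card (emi ` P) \<le> rank (nat_matrix em en G)"
  proof (rule card_le_rank_if_rows_indep)
    fix f assume zero: "(\<Sum>\<rho>\<in>emi ` P. f \<rho> *s row \<rho> (nat_matrix em en G)) = 0"
    have "(\<Sum>u\<in>P. f (emi u) * G u v) = 0" if "v < n" for v
    proof -
      have en_eni: "en (inv_into UNIV en v) = v"
        using bij_betw_inv_into_right[OF en] that by simp
      have "0 = (\<Sum>\<rho>\<in>emi ` P. f \<rho> *s row \<rho> (nat_matrix em en G)) $ inv_into UNIV en v"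
        using zero by simp
      also have "\<dots> = (\<Sum>u\<in>P. f (emi u) * G (em (emi u)) v)"
        by (simp add: sum_component sum.reindex[OF \<open>inj_on emi P\<close>] row_def nat_matrix_def en_eni)
      also have "\<dots> = (\<Sum>u\<in>P. f (emi u) * G u v)"
        using \<open>P \<subseteq> {..<m}\<close> em_emi by (intro sum.cong) auto
      finally show ?thesis by simp
    qed
    then have "\<forall>u\<in>P. f (emi u) = 0"
      using indep unfolding indep_rows_def by (elim allE[of _ "\<lambda>u. f (emi u)"]) simp
    then show "\<forall>\<rho>\<in>emi ` P. f \<rho> = 0" by blast
  qed
  then show ?thesis using card_image[OF \<open>inj_on emi P\<close>] by simp
qed

text \<open>The symmetric \<open>n \<times> n\<close> matrix \<open>[I, A; A\<^sup>T, A\<^sup>T A] = [I; A\<^sup>T] [I, A]\<close> built from a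
  \<open>\<tau> \<times> (n - \<tau>)\<close> matrix \<open>A\<close>, extended by zero rows.\<close>
definition lift_entry :: "nat \<Rightarrow> nat \<Rightarrow> (nat \<Rightarrow> nat \<Rightarrow> 'a::comm_ring_1) \<Rightarrow> nat \<Rightarrow> nat \<Rightarrow> 'a" where
  "lift_entry \<tau> n A u v =
     (if u < \<tau> then (if v < \<tau> then (if u = v then 1 else 0) else A u (v - \<tau>))
      else if u < n then (if v < \<tau> then A v (u - \<tau>) else (\<Sum>i<\<tau>. A i (u - \<tau>) * A i (v - \<tau>)))
      else 0)"

lemma lift_entry_row_combination:
  "\<exists>c. \<forall>v. lift_entry \<tau> n A u v = (\<Sum>i<\<tau>. c i * lift_entry \<tau> n A i v)"
proof -
  consider "u < \<tau>" | "\<tau> \<le> u" "u < n" | "n \<le> u" "\<tau> \<le> u" by linarith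
  then show ?thesis
  proof cases
    case 1
    have "(\<Sum>i<\<tau>. (if i = u then 1 else 0) * lift_entry \<tau> n A i v) = lift_entry \<tau> n A u v" for v
    proof -
      have "(\<Sum>i<\<tau>. (if i = u then 1 else 0) * lift_entry \<tau> n A i v)
          = (\<Sum>i<\<tau>. if i = u then lift_entry \<tau> n A i v else 0)"
        by (intro sum.cong) auto
      then show ?thesis using 1 by simp
    qed
    then show ?thesis by (intro exI[of _ "\<lambda>i. if i = u then 1 else 0"]) simp
  next
    case 2
    have comb: "lift_entry \<tau> n A u v = (\<Sum>i<\<tau>. A i (u - \<tau>) * lift_entry \<tau> n A i v)" for v
    proof (cases "v < \<tau>")
      case True
      then have "(\<Sum>i<\<tau>. A i (u - \<tau>) * lift_entry \<tau> n A i v) = (\<Sum>i<\<tau>. if i = v then A i (u - \<tau>) else 0)"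
        by (intro sum.cong) (auto simp: lift_entry_def)
      then show ?thesis using 2 True by (simp add: lift_entry_def)
    qed (use 2 in \<open>simp add: lift_entry_def\<close>)
    show ?thesis by (intro exI[of _ "\<lambda>i. A i (u - \<tau>)"] allI comb)
  next
    case 3
    then show ?thesis by (intro exI[of _ "\<lambda>_. 0"]) (simp add: lift_entry_def)
  qed
qed

lemma indep_rows_lift_diff:
  fixes A A' :: "nat \<Rightarrow> nat \<Rightarrow> 'a::field"
  defines "D \<equiv> \<lambda>i k. A i k - A' i k"
  assumes "n = \<tau> + N" and I: "I \<subseteq> {..<\<tau>}" "indep_rows D I {..<N}"
    and K: "K \<subseteq> {..<N}" "indep_rows (\<lambda>k i. D i k) K {..<\<tau>}"
  shows "indep_rows (\<lambda>u v. lift_entry \<tau> n A u v - lift_entry \<tau> n A' u v) (I \<union> (+) \<tau> ` K) {..<n}"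
  unfolding indep_rows_def
proof (intro allI impI)
  fix l assume zero: "\<forall>v\<in>{..<n}. (\<Sum>u\<in>I \<union> (+) \<tau> ` K. l u * (lift_entry \<tau> n A u v - lift_entry \<tau> n A' u v)) = 0"
  define G where "G u v = lift_entry \<tau> n A u v - lift_entry \<tau> n A' u v" for u v
  have "finite I" "finite K" using I(1) K(1) finite_subset by auto
  have sum_split: "(\<Sum>i\<in>I. l i * G i v) + (\<Sum>k\<in>K. l (\<tau> + k) * G (\<tau> + k) v) = 0" if "v < n" for v
  proof -
    have "I \<inter> (+) \<tau> ` K = {}" using I(1) by auto
    then have "(\<Sum>u\<in>I \<union> (+) \<tau> ` K. l u * G u v) = (\<Sum>i\<in>I. l i * G i v) + (\<Sum>u\<in>(+) \<tau> ` K. l u * G u v)"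
      using \<open>finite I\<close> \<open>finite K\<close> by (intro sum.union_disjoint) auto
    also have "(\<Sum>u\<in>(+) \<tau> ` K. l u * G u v) = (\<Sum>k\<in>K. l (\<tau> + k) * G (\<tau> + k) v)"
      by (simp add: sum.reindex)
    finally show ?thesis using zero that by (simp add: G_def)
  qed
  have lower: "\<forall>k\<in>K. l (\<tau> + k) = 0"
  proof -
    have "(\<Sum>k\<in>K. l (\<tau> + k) * D v k) = 0" if "v < \<tau>" for v
    proof -
      have "(\<Sum>i\<in>I. l i * G i v) = 0"
        using I(1) that by (intro sum.neutral) (auto simp: G_def lift_entry_def)
      moreover have "(\<Sum>k\<in>K. l (\<tau> + k) * G (\<tau> + k) v) = (\<Sum>k\<in>K. l (\<tau> + k) * D v k)"
        using K(1) that \<open>n = \<tau> + N\<close> by (intro sum.cong) (auto simp: G_def D_def lift_entry_def)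
      ultimately show ?thesis using sum_split[of v] that \<open>n = \<tau> + N\<close> by simp
    qed
    then show ?thesis using K(2) unfolding indep_rows_def by (elim allE[of _ "\<lambda>k. l (\<tau> + k)"]) simp
  qed
  have "(\<Sum>i\<in>I. l i * D i k) = 0" if "k < N" for k
  proof -
    have "(\<Sum>k'\<in>K. l (\<tau> + k') * G (\<tau> + k') (\<tau> + k)) = 0" using lower by simp
    moreover have "(\<Sum>i\<in>I. l i * G i (\<tau> + k)) = (\<Sum>i\<in>I. l i * D i k)"
      using I(1) by (intro sum.cong) (auto simp: G_def D_def lift_entry_def)
    ultimately show ?thesis using sum_split[of "\<tau> + k"] that \<open>n = \<tau> + N\<close> by simp
  qed
  then have "\<forall>i\<in>I. l i = 0" using I(2) unfolding indep_rows_def by blast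
  then show "\<forall>u\<in>I \<union> (+) \<tau> ` K. l u = 0" using lower by blast
qed

lemma exists_code_in_ball:
  fixes M :: "'c set" and A :: "'c \<Rightarrow> nat \<Rightarrow> nat \<Rightarrow> 'a::field"
  assumes "CARD('n::finite) = \<tau> + N" "\<tau> + N \<le> CARD('m::finite)" "r > 0"
    and dist: "\<And>c c'. c \<in> M \<Longrightarrow> c' \<in> M \<Longrightarrow> c \<noteq> c' \<Longrightarrow> rank_at_least (\<lambda>i k. A c i k - A c' i k) \<tau> N r"
  shows "\<exists>C :: ('a^'n^'m) set. card C = card M \<and> C \<subseteq> rank_ball \<tau> 0 \<and> min_rank_dist_ge C (2 * r)"
proof -
  obtain em :: "'m \<Rightarrow> nat" where em: "bij_betw em UNIV {..<CARD('m)}"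
    using ex_bij_betw_finite_nat[of "UNIV :: 'm set"] by (auto simp: atLeast0LessThan)
  obtain en :: "'n \<Rightarrow> nat" where en: "bij_betw en UNIV {..<\<tau> + N}"
    using ex_bij_betw_finite_nat[of "UNIV :: 'n set"] assms(1) by (auto simp: atLeast0LessThan)
  define lift_word where "lift_word c = nat_matrix em en (lift_entry \<tau> (\<tau> + N) (A c))" for c
  have ball: "rank (lift_word c) \<le> \<tau>" for c
    unfolding lift_word_def using assms(2)
    by (intro rank_nat_matrix_le[OF em] lift_entry_row_combination) simp
  have far: "2 * r \<le> rank (lift_word c - lift_word c')" if cc: "c \<in> M" "c' \<in> M" "c \<noteq> c'" for c c'
  proof -
    obtain I K where I: "I \<subseteq> {..<\<tau>}" "r \<le> card I" "indep_rows (\<lambda>i k. A c i k - A c' i k) I {..<N}"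
      and K: "K \<subseteq> {..<N}" "r \<le> card K" "indep_rows (\<lambda>k i. A c i k - A c' i k) K {..<\<tau>}"
      using dist[OF cc] unfolding rank_at_least_def by blast
    have "card (I \<union> (+) \<tau> ` K) = card I + card K"
      using I(1) K(1) finite_subset by (subst card_Un_disjoint) (auto simp: card_image)
    moreover have "I \<union> (+) \<tau> ` K \<subseteq> {..<CARD('m)}" using I(1) K(1) assms(2) by auto
    ultimately show ?thesis
      using card_le_rank_nat_matrix[OF em en _ indep_rows_lift_diff[OF refl I(1,3) K(1,3)]] I(2) K(2)
      unfolding lift_word_def nat_matrix_diff by simp
  qed
  have "inj_on lift_word M"
  proof (rule inj_onI, rule ccontr)
    fix c c' assume "c \<in> M" "c' \<in> M" "lift_word c = lift_word c'" "c \<noteq> c'"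
    then show False using far[of c c'] \<open>r > 0\<close> by (simp add: rank_zero_matrix)
  qed
  then show ?thesis
    using ball far
    by (intro exI[of _ "lift_word ` M"]) (auto simp: card_image rank_ball_def min_rank_dist_ge_def)
qed

theorem theorem4:
  fixes q d \<tau> n m :: nat
    and field_witness :: "'a::{finite,field} itself"
    and dims_witness :: "('n::finite \<times> 'm::finite) itself"
  assumes "CARD('a) = q"
    and "CARD('n) = n" and "CARD('m) = m"
    and "(d - 1) div 2 + 1 \<le> \<tau>" and "\<tau> < d" and "d \<le> n" and "n \<le> m"
    and "\<tau> \<le> n - \<tau>"
  shows "\<exists>(C :: ('a^'n^'m) set) (r :: 'a^'n^'m).
           min_rank_dist_ge C d \<and>
           Max ((\<lambda>y. card (C \<inter> rank_ball \<tau> y)) ` UNIV) \<ge> card (C \<inter> rank_ball \<tau> r) \<and>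
           card (C \<inter> rank_ball \<tau> r) \<ge> q ^ ((n - \<tau>) * (\<tau> - (d - 1) div 2))"
proof -
  define t where "t = (d - 1) div 2"
  define N where "N = n - \<tau>"
  have "1 \<le> \<tau> - t" "\<tau> - t \<le> \<tau>" "\<tau> \<le> N" "\<tau> - (\<tau> - t) + 1 = t + 1"
    using assms(4,8) by (auto simp: t_def N_def)
  then obtain M :: "(nat \<Rightarrow> 'a alg_closure) set" and A :: "_ \<Rightarrow> nat \<Rightarrow> nat \<Rightarrow> 'a"
    where M: "card M = q ^ (N * (\<tau> - t))"
    and dist: "\<forall>c\<in>M. \<forall>c'\<in>M. c \<noteq> c' \<longrightarrow> rank_at_least (\<lambda>i k. A c i k - A c' i k) \<tau> N (t + 1)"
    using exists_gabidulin_matrices[where 'a='a, of "\<tau> - t" \<tau> N] assms(1) by auto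
  have "CARD('n) = \<tau> + N" "\<tau> + N \<le> CARD('m)" using assms(2,3,5-7) by (auto simp: N_def)
  then have "\<exists>C :: ('a^'n^'m) set. card C = card M \<and> C \<subseteq> rank_ball \<tau> 0
      \<and> min_rank_dist_ge C (2 * (t + 1))"
    by (rule exists_code_in_ball[where A = A]) (use dist in auto)
  then obtain C :: "('a^'n^'m) set" where C: "card C = card M" "C \<subseteq> rank_ball \<tau> 0"
      "min_rank_dist_ge C (2 * (t + 1))"
    by blast
  have "d \<le> 2 * (t + 1)" unfolding t_def by presburger
  then have "min_rank_dist_ge C d"
    using C(3) unfolding min_rank_dist_ge_def by (meson order_trans)
  moreover have "card (C \<inter> rank_ball \<tau> 0) \<le> Max ((\<lambda>y. card (C \<inter> rank_ball \<tau> y)) ` UNIV)"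
    by (rule Max_ge) auto
  moreover have "card (C \<inter> rank_ball \<tau> 0) = q ^ ((n - \<tau>) * (\<tau> - (d - 1) div 2))"
    using C(1) M by (simp add: Int_absorb2[OF C(2)] N_def t_def)
  ultimately show ?thesis by (intro exI[of _ C] exI[of _ 0]) simp
qed

end
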